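(* The axiom systems $EL_{int}$ and $PAL_{int}$ are sound with respect to the class of all topo-models: every theorem of $EL_{int}$ and every theorem of $PAL_{int}$ is valid in every topo-model.
   Context: Fix a countable set $\mathit{Prop}$ of propositional variables and a finite non-empty set $\mathcal{A}$ of agents. $\mathcal{L}_{PAL_{int}}$: $\varphi ::= p \mid \neg\varphi \mid \varphi\wedge\varphi \mid K_i\varphi \mid \mathrm{int}(\varphi)\mid [\varphi]\varphi$; $\mathcal{L}_{EL_{int}}$ is its fragment without $[\cdot]$; $\bot:=p\wedge\neg p$. Topo-models: $(X,\tau)$ a topological space with interior operator $\mathrm{Int}$. A neighbourhood function set $\Phi$ is a set of partial functions $\theta$ from $X$ to functions $\mathcal{A}\to\tau$ such that for all $x,y\in Dom(\theta)$, $i\in\mathcal{A}$, $U\in\tau$: (1) $\theta(x)(i)\in\tau$; (2) $x\in\theta(x)(i)$; (3) $\theta(x)(i)\subseteq Dom(\theta)$; (4) $y\in\theta(x)(i)$ implies $\theta(x)(i)=\theta(y)(i)$; (5) $\theta|_U\in\Phi$, where $Dom(\theta|_U)=Dom(\theta)\cap U$, $\theta|_U(x)(i)=\theta(x)(i)\cap U$. A topo-model is $(X,\tau,\Phi,V)$ with $V(p)\subseteq X$. Neighbourhood situations are $(x,\theta)$, $\theta\in\Phi$, $x\in Dom(\theta)$. Semantics: $(x,\theta)\models p$ iff $x\in V(p)$; Booleans usual; $(x,\theta)\models K_i\varphi$ iff $(y,\theta)\models\varphi$ for all $y\in\theta(x)(i)$; $(x,\theta)\models\mathrm{int}(\varphi)$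 iff $x\in\mathrm{Int}([\![\varphi]\!]^\theta)$ with $[\![\varphi]\!]^\theta=\{y\in Dom(\theta)\mid(y,\theta)\models\varphi\}$; $(x,\theta)\models[\varphi]\psi$ iff $(x,\theta)\models\mathrm{int}(\varphi)$ implies $(x,\theta^\varphi)\models\psi$, with $\theta^\varphi=\theta|_{\mathrm{Int}([\![\varphi]\!]^\theta)}$. Validity = truth at all neighbourhood situations. $EL_{int}$: axioms: propositional tautologies; $K_i(\varphi\to\psi)\to(K_i\varphi\to K_i\psi)$; $K_i\varphi\to\varphi$; $K_i\varphi\to K_iK_i\varphi$; $\neg K_i\varphi\to K_i\neg K_i\varphi$; $\mathrm{int}(\varphi\to\psi)\to(\mathrm{int}(\varphi)\to\mathrm{int}(\psi))$; $\mathrm{int}(\varphi)\to\varphi$; $\mathrm{int}(\varphi)\to\mathrm{int}(\mathrm{int}(\varphi))$; $K_i\varphi\to\mathrm{int}(\varphi)$; rules: modus ponens, from $\varphi$ infer $K_i\varphi$, from $\varphi$ infer $\mathrm{int}(\varphi)$. $PAL_{int}$ adds the axioms (R1) $[\varphi]p\leftrightarrow(\mathrm{int}(\varphi)\to p)$; (R2) $[\varphi]\neg\psi\leftrightarrow(\mathrm{int}(\varphi)\to\neg[\varphi]\psi)$; (R3) $[\varphi](\psi\wedge\chi)\leftrightarrow[\varphi]\psi\wedge[\varphi]\chi$; (R4) $[\varphi]\mathrm{int}(\psi)\leftrightarrow(\mathrm{int}(\varphi)\to\mathrm{int}([\varphi]\psi))$; (R5) $[\varphi]K_i\psi\leftrightarrow(\mathrm{int}(\varphi)\to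 K_i[\varphi]\psi)$; (R6) $[\varphi][\psi]\chi\leftrightarrow[\neg[\varphi]\neg\mathrm{int}(\psi)]\chi$, and the rule from $\varphi$ infer $[\psi]\varphi$. *)

theory Defs
  imports "HOL-Analysis.Analysis" "HOL-Library.Countable"
begin

datatype ('p, 'ag) fm =
    Atom 'p
  | Neg "('p, 'ag) fm"
  | Conj "('p, 'ag) fm" "('p, 'ag) fm"
  | K 'ag "('p, 'ag) fm"
  | IntOp "('p, 'ag) fm"
  | Ann "('p, 'ag) fm" "('p, 'ag) fm"

definition Imp :: "('p, 'ag) fm \<Rightarrow> ('p, 'ag) fm \<Rightarrow> ('p, 'ag) fm" where
  "Imp a b = Neg (Conj a (Neg b))"

definition Iff :: "('p, 'ag) fm \<Rightarrow> ('p, 'ag) fm \<Rightarrow> ('p, 'ag) fm" where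
  "Iff a b = Conj (Imp a b) (Imp b a)"

primrec el_fm :: "('p, 'ag) fm \<Rightarrow> bool" where
  "el_fm (Atom p) = True"
| "el_fm (Neg a) = el_fm a"
| "el_fm (Conj a b) = (el_fm a \<and> el_fm b)"
| "el_fm (K i a) = el_fm a"
| "el_fm (IntOp a) = el_fm a"
| "el_fm (Ann a b) = False"

text \<open>Propositional tautologies: formulas true under every Boolean valuation
  of their maximal non-Boolean subformulas.\<close>
primrec peval :: "(('p, 'ag) fm \<Rightarrow> bool) \<Rightarrow> ('p, 'ag) fm \<Rightarrow> bool" where
  "peval v (Atom p) = v (Atom p)"
| "peval v (Neg a) = (\<not> peval v a)"
| "peval v (Conj a b) = (peval v a \<and> peval v b)"
| "peval v (K i a) = v (K i a)"
| "peval v (IntOp a) = v (IntOp a)"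
| "peval v (Ann a b) = v (Ann a b)"

definition ptaut :: "('p, 'ag) fm \<Rightarrow> bool" where
  "ptaut a = (\<forall>v. peval v a)"

inductive ELint :: "('p, 'ag) fm \<Rightarrow> bool" where
  taut: "el_fm a \<Longrightarrow> ptaut a \<Longrightarrow> ELint a"
| K_dist: "el_fm a \<Longrightarrow> el_fm b \<Longrightarrow> ELint (Imp (K i (Imp a b)) (Imp (K i a) (K i b)))"
| K_T: "el_fm a \<Longrightarrow> ELint (Imp (K i a) a)"
| K_4: "el_fm a \<Longrightarrow> ELint (Imp (K i a) (K i (K i a)))"
| K_5: "el_fm a \<Longrightarrow> ELint (Imp (Neg (K i a)) (K i (Neg (K i a))))"
| int_dist: "el_fm a \<Longrightarrow> el_fm b \<Longrightarrow> ELint (Imp (IntOp (Imp a b)) (Imp (IntOp a) (IntOp b)))"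
| int_T: "el_fm a \<Longrightarrow> ELint (Imp (IntOp a) a)"
| int_4: "el_fm a \<Longrightarrow> ELint (Imp (IntOp a) (IntOp (IntOp a)))"
| K_int: "el_fm a \<Longrightarrow> ELint (Imp (K i a) (IntOp a))"
| MP: "ELint (Imp a b) \<Longrightarrow> ELint a \<Longrightarrow> ELint b"
| K_nec: "ELint a \<Longrightarrow> ELint (K i a)"
| int_nec: "ELint a \<Longrightarrow> ELint (IntOp a)"

inductive PALint :: "('p, 'ag) fm \<Rightarrow> bool" where
  taut: "ptaut a \<Longrightarrow> PALint a"
| K_dist: "PALint (Imp (K i (Imp a b)) (Imp (K i a) (K i b)))"
| K_T: "PALint (Imp (K i a) a)"
| K_4: "PALint (Imp (K i a) (K i (K i a)))"
| K_5: "PALint (Imp (Neg (K i a)) (K i (Neg (K i a))))"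
| int_dist: "PALint (Imp (IntOp (Imp a b)) (Imp (IntOp a) (IntOp b)))"
| int_T: "PALint (Imp (IntOp a) a)"
| int_4: "PALint (Imp (IntOp a) (IntOp (IntOp a)))"
| K_int: "PALint (Imp (K i a) (IntOp a))"
| R1: "PALint (Iff (Ann a (Atom p)) (Imp (IntOp a) (Atom p)))"
| R2: "PALint (Iff (Ann a (Neg b)) (Imp (IntOp a) (Neg (Ann a b))))"
| R3: "PALint (Iff (Ann a (Conj b c)) (Conj (Ann a b) (Ann a c)))"
| R4: "PALint (Iff (Ann a (IntOp b)) (Imp (IntOp a) (IntOp (Ann a b))))"
| R5: "PALint (Iff (Ann a (K i b)) (Imp (IntOp a) (K i (Ann a b))))"
| R6: "PALint (Iff (Ann a (Ann b c)) (Ann (Neg (Ann a (Neg (IntOp b)))) c))"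
| MP: "PALint (Imp a b) \<Longrightarrow> PALint a \<Longrightarrow> PALint b"
| K_nec: "PALint a \<Longrightarrow> PALint (K i a)"
| int_nec: "PALint a \<Longrightarrow> PALint (IntOp a)"
| ann_nec: "PALint a \<Longrightarrow> PALint (Ann b a)"

text \<open>A neighbourhood function is a partial function from points to
  functions agents \<Rightarrow> sets; Dom = dom.\<close>
type_synonym ('x, 'ag) nbf = "'x \<Rightarrow> ('ag \<Rightarrow> 'x set) option"

definition restr :: "('x, 'ag) nbf \<Rightarrow> 'x set \<Rightarrow> ('x, 'ag) nbf" where
  "restr \<theta> U = (\<lambda>x. if x \<in> U then map_option (\<lambda>f i. f i \<inter> U) (\<theta> x) else None)"

record ('x, 'ag, 'p) topo_model =
  top :: "'x topology"
  Phi :: "('x, 'ag) nbf set"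
  val :: "'p \<Rightarrow> 'x set"

definition nbf_set :: "'x topology \<Rightarrow> ('x, 'ag) nbf set \<Rightarrow> bool" where
  "nbf_set T F \<longleftrightarrow>
    (\<forall>\<theta>\<in>F. dom \<theta> \<subseteq> topspace T \<and>
      (\<forall>x\<in>dom \<theta>. \<forall>i. openin T (the (\<theta> x) i)
          \<and> x \<in> the (\<theta> x) i
          \<and> the (\<theta> x) i \<subseteq> dom \<theta>
          \<and> (\<forall>y\<in>dom \<theta>. y \<in> the (\<theta> x) i \<longrightarrow> the (\<theta> x) i = the (\<theta> y) i)) \<and>
      (\<forall>U. openin T U \<longrightarrow> restr \<theta> U \<in> F))"

definition topo_model :: "('x, 'ag, 'p) topo_model \<Rightarrow> bool" where
  "topo_model M \<longleftrightarrow> nbf_set (top M) (Phi M) \<and> (\<forall>p. val M p \<subseteq> topspace (top M))"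

primrec sat :: "('x, 'ag, 'p) topo_model \<Rightarrow> ('p, 'ag) fm \<Rightarrow> ('x, 'ag) nbf \<Rightarrow> 'x \<Rightarrow> bool" where
  "sat M (Atom p) \<theta> x = (x \<in> val M p)"
| "sat M (Neg a) \<theta> x = (\<not> sat M a \<theta> x)"
| "sat M (Conj a b) \<theta> x = (sat M a \<theta> x \<and> sat M b \<theta> x)"
| "sat M (K i a) \<theta> x = (\<forall>y\<in>the (\<theta> x) i. sat M a \<theta> y)"
| "sat M (IntOp a) \<theta> x = (x \<in> top M interior_of {y \<in> dom \<theta>. sat M a \<theta> y})"
| "sat M (Ann a b) \<theta> x =
     (x \<in> top M interior_of {y \<in> dom \<theta>. sat M a \<theta> y} \<longrightarrow>
      sat M b (restr \<theta> (top M interior_of {y \<in> dom \<theta>. sat M a \<theta> y})) x)"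

definition valid_in :: "('x, 'ag, 'p) topo_model \<Rightarrow> ('p, 'ag) fm \<Rightarrow> bool" where
  "valid_in M a \<longleftrightarrow> (\<forall>\<theta>\<in>Phi M. \<forall>x\<in>dom \<theta>. sat M a \<theta> x)"

end

theory Submission
  imports Defs
begin

text \<open>The epistemic axioms hold because the neighbourhoods of a neighbourhood
  function partition its open domain, \<open>K\<^sub>i\<phi> \<rightarrow> int(\<phi>)\<close> because every neighbourhood is open,
  and the interior axioms are those of any topology. The reduction axioms (R4)--(R6) rest on
  the fact that an announcement restricts the neighbourhood function to an open set \<open>U\<close>, and
  relative to an open set the interior operator commutes with intersecting by \<open>U\<close>.\<close>

abbreviation truth_set :: "('x, 'ag, 'p) topo_model \<Rightarrow> ('p, 'ag) fm \<Rightarrow> ('x, 'ag) nbf \<Rightarrow> 'x set"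
  where "truth_set M a \<theta> \<equiv> {y \<in> dom \<theta>. sat M a \<theta> y}"

lemma sat_Imp [simp]: "sat M (Imp a b) \<theta> x = (sat M a \<theta> x \<longrightarrow> sat M b \<theta> x)"
  by (simp add: Imp_def)

lemma sat_Iff [simp]: "sat M (Iff a b) \<theta> x = (sat M a \<theta> x \<longleftrightarrow> sat M b \<theta> x)"
  by (auto simp add: Iff_def)

lemma peval_sat: "peval (\<lambda>f. sat M f \<theta> x) a = sat M a \<theta> x"
  by (induction a) auto

lemma nbf_setD:
  assumes "nbf_set T F" "\<theta> \<in> F" "x \<in> dom \<theta>"
  shows nbf_set_openin_nbhd: "openin T (the (\<theta> x) i)"
    and nbf_set_in_nbhd: "x \<in> the (\<theta> x) i"
    and nbf_set_nbhd_subset_dom: "the (\<theta> x) i \<subseteq> dom \<theta>"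
    and nbf_set_nbhd_eq: "y \<in> the (\<theta> x) i \<Longrightarrow> the (\<theta> y) i = the (\<theta> x) i"
proof -
  from assms have "openin T (the (\<theta> x) i) \<and> x \<in> the (\<theta> x) i \<and> the (\<theta> x) i \<subseteq> dom \<theta> \<and>
      (\<forall>y\<in>dom \<theta>. y \<in> the (\<theta> x) i \<longrightarrow> the (\<theta> x) i = the (\<theta> y) i)"
    unfolding nbf_set_def by blast
  then show "openin T (the (\<theta> x) i)" "x \<in> the (\<theta> x) i" "the (\<theta> x) i \<subseteq> dom \<theta>"
    "y \<in> the (\<theta> x) i \<Longrightarrow> the (\<theta> y) i = the (\<theta> x) i"
    by auto
qed

lemma nbf_set_restr: "nbf_set T F \<Longrightarrow> \<theta> \<in> F \<Longrightarrow> openin T U \<Longrightarrow> restr \<theta> U \<in> F"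
  unfolding nbf_set_def by blast

lemma nbf_set_openin_dom:
  assumes "nbf_set T F" "\<theta> \<in> F"
  shows "openin T (dom \<theta>)"
proof (subst openin_subopen, intro ballI)
  fix x i assume "x \<in> dom \<theta>"
  then show "\<exists>U. openin T U \<and> x \<in> U \<and> U \<subseteq> dom \<theta>"
    by (intro exI[of _ "the (\<theta> x) i"] conjI nbf_setD[OF assms])
qed

lemma topo_model_nbf_set: "topo_model M \<Longrightarrow> nbf_set (top M) (Phi M)"
  by (simp add: topo_model_def)

lemma dom_restr: "dom (restr \<theta> U) = dom \<theta> \<inter> U"
  unfolding restr_def dom_def by auto

lemma restr_nbhd: "x \<in> dom \<theta> \<Longrightarrow> x \<in> U \<Longrightarrow> the (restr \<theta> U x) i = the (\<theta> x) i \<inter> U"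
  unfolding restr_def by auto

lemma restr_restr:
  fixes \<theta> :: "('x, 'ag) nbf"
  assumes "V \<subseteq> U"
  shows "restr (restr \<theta> U) V = restr \<theta> V"
proof -
  have "(\<lambda>i. f i \<inter> U \<inter> V) = (\<lambda>i. f i \<inter> V)" for f :: "'ag \<Rightarrow> 'x set"
    using assms by auto
  then show ?thesis
    using assms unfolding restr_def by (auto simp: option.map_comp comp_def fun_eq_iff)
qed

lemma interior_of_truth_set_subset_dom: "T interior_of {y \<in> dom \<theta>. P y} \<subseteq> dom \<theta>"
  using interior_of_subset[of T "{y \<in> dom \<theta>. P y}"] by blast

lemma dom_restr_interior_of_truth_set:
  "dom (restr \<theta> (T interior_of {y \<in> dom \<theta>. P y})) = T interior_of {y \<in> dom \<theta>. P y}"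
  unfolding dom_restr by (rule Int_absorb1[OF interior_of_truth_set_subset_dom])

lemma in_interior_of_restr_iff:
  assumes "openin T U" "U \<subseteq> dom \<theta>" "x \<in> U"
  shows "x \<in> T interior_of {y \<in> dom (restr \<theta> U). P y} \<longleftrightarrow>
         x \<in> T interior_of {y \<in> dom \<theta>. y \<in> U \<longrightarrow> P y}"
proof -
  have "{y \<in> dom (restr \<theta> U). P y} = U \<inter> {y \<in> dom \<theta>. y \<in> U \<longrightarrow> P y}"
    using assms(2) by (auto simp: dom_restr)
  then show ?thesis
    using assms(1,3) by (simp add: interior_of_Int interior_of_openin)
qed

lemma valid_in_ptaut: "ptaut a \<Longrightarrow> valid_in M a"
  unfolding valid_in_def ptaut_def using peval_sat by metis

lemma valid_in_K_dist: "valid_in M (Imp (K i (Imp a b)) (Imp (K i a) (K i b)))"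
  unfolding valid_in_def by auto

lemma valid_in_K_T: "topo_model M \<Longrightarrow> valid_in M (Imp (K i a) a)"
  unfolding valid_in_def using nbf_set_in_nbhd[OF topo_model_nbf_set] by fastforce

lemma valid_in_K_4: "topo_model M \<Longrightarrow> valid_in M (Imp (K i a) (K i (K i a)))"
  unfolding valid_in_def using nbf_set_nbhd_eq[OF topo_model_nbf_set] by fastforce

lemma valid_in_K_5: "topo_model M \<Longrightarrow> valid_in M (Imp (Neg (K i a)) (K i (Neg (K i a))))"
  unfolding valid_in_def using nbf_set_nbhd_eq[OF topo_model_nbf_set] by fastforce

lemma valid_in_int_dist: "valid_in M (Imp (IntOp (Imp a b)) (Imp (IntOp a) (IntOp b)))"
  unfolding valid_in_def
proof (intro ballI)
  fix \<theta> x
  let ?T = "top M"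
  have "?T interior_of truth_set M (Imp a b) \<theta> \<inter> ?T interior_of truth_set M a \<theta>
     = ?T interior_of (truth_set M (Imp a b) \<theta> \<inter> truth_set M a \<theta>)"
    by (simp add: interior_of_Int)
  also have "\<dots> \<subseteq> ?T interior_of truth_set M b \<theta>"
    by (rule interior_of_mono) auto
  finally show "sat M (Imp (IntOp (Imp a b)) (Imp (IntOp a) (IntOp b))) \<theta> x" by auto
qed

lemma valid_in_int_T: "valid_in M (Imp (IntOp a) a)"
  unfolding valid_in_def using interior_of_subset by fastforce

lemma valid_in_int_4: "valid_in M (Imp (IntOp a) (IntOp (IntOp a)))"
  unfolding valid_in_def
proof (intro ballI)
  fix \<theta> x
  let ?S = "top M interior_of truth_set M a \<theta>"
  have S: "{y \<in> dom \<theta>. y \<in> ?S} = ?S"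
    using interior_of_truth_set_subset_dom[of "top M" \<theta> "\<lambda>y. sat M a \<theta> y"] by blast
  show "sat M (Imp (IntOp a) (IntOp (IntOp a))) \<theta> x"
    unfolding sat_Imp sat.simps(5) S interior_of_interior_of by (rule impI)
qed

lemma valid_in_K_int:
  assumes "topo_model M"
  shows "valid_in M (Imp (K i a) (IntOp a))"
  unfolding valid_in_def
proof (intro ballI)
  fix \<theta> x assume "\<theta> \<in> Phi M" "x \<in> dom \<theta>"
  note nbhd = nbf_setD(1-3)[OF topo_model_nbf_set[OF assms] this, where i = i]
  show "sat M (Imp (K i a) (IntOp a)) \<theta> x"
    unfolding sat_Imp
  proof
    assume "sat M (K i a) \<theta> x"
    then have "the (\<theta> x) i \<subseteq> top M interior_of truth_set M a \<theta>"
      using nbhd by (intro interior_of_maximal) auto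
    then show "sat M (IntOp a) \<theta> x"
      using nbhd by auto
  qed
qed

lemma valid_in_R1: "valid_in M (Iff (Ann a (Atom p)) (Imp (IntOp a) (Atom p)))"
  unfolding valid_in_def by auto

lemma valid_in_R2: "valid_in M (Iff (Ann a (Neg b)) (Imp (IntOp a) (Neg (Ann a b))))"
  unfolding valid_in_def by auto

lemma valid_in_R3: "valid_in M (Iff (Ann a (Conj b c)) (Conj (Ann a b) (Ann a c)))"
  unfolding valid_in_def by auto

lemma valid_in_R4: "valid_in M (Iff (Ann a (IntOp b)) (Imp (IntOp a) (IntOp (Ann a b))))"
  unfolding valid_in_def
proof (intro ballI)
  fix \<theta> x
  define U where "U = top M interior_of truth_set M a \<theta>"
  have "x \<in> U \<Longrightarrow> x \<in> top M interior_of truth_set M b (restr \<theta> U) \<longleftrightarrow>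
      x \<in> top M interior_of {y \<in> dom \<theta>. y \<in> U \<longrightarrow> sat M b (restr \<theta> U) y}"
    unfolding U_def by (rule in_interior_of_restr_iff) (simp_all add: interior_of_truth_set_subset_dom)
  then show "sat M (Iff (Ann a (IntOp b)) (Imp (IntOp a) (IntOp (Ann a b)))) \<theta> x"
    by (simp add: U_def[symmetric])
qed

lemma valid_in_R5: "valid_in M (Iff (Ann a (K i b)) (Imp (IntOp a) (K i (Ann a b))))"
  unfolding valid_in_def
  by (auto simp: restr_nbhd)

lemma truth_set_composed_announcement:
  fixes M :: "('x, 'ag, 'p) topo_model" and a b :: "('p, 'ag) fm" and \<theta> :: "('x, 'ag) nbf"
  defines "U \<equiv> top M interior_of truth_set M a \<theta>"
  shows "truth_set M (Neg (Ann a (Neg (IntOp b)))) \<theta>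
       = top M interior_of truth_set M b (restr \<theta> U)"
proof -
  have "top M interior_of truth_set M b (restr \<theta> U) \<subseteq> U"
    using interior_of_truth_set_subset_dom[of "top M" "restr \<theta> U"]
    by (simp add: U_def dom_restr_interior_of_truth_set)
  moreover have "U \<subseteq> dom \<theta>"
    unfolding U_def by (rule interior_of_truth_set_subset_dom)
  ultimately show ?thesis
    by (auto simp: U_def[symmetric])
qed

lemma valid_in_R6: "valid_in M (Iff (Ann a (Ann b c)) (Ann (Neg (Ann a (Neg (IntOp b)))) c))"
  unfolding valid_in_def
proof (intro ballI)
  fix \<theta> x
  define U where "U = top M interior_of truth_set M a \<theta>"
  define V where "V = top M interior_of truth_set M b (restr \<theta> U)"
  have "V \<subseteq> U"
    using interior_of_truth_set_subset_dom[of "top M" "restr \<theta> U"]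
    by (simp add: U_def V_def dom_restr_interior_of_truth_set)
  moreover have "top M interior_of truth_set M (Neg (Ann a (Neg (IntOp b)))) \<theta> = V"
    unfolding truth_set_composed_announcement V_def U_def by simp
  ultimately show "sat M (Iff (Ann a (Ann b c)) (Ann (Neg (Ann a (Neg (IntOp b)))) c)) \<theta> x"
    by (auto simp: restr_restr U_def[symmetric] V_def[symmetric] simp del: sat.simps(2,3)
        intro!: arg_cong[where f = "\<lambda>\<theta>. sat M c \<theta> x"])
qed

lemma valid_in_MP: "valid_in M (Imp a b) \<Longrightarrow> valid_in M a \<Longrightarrow> valid_in M b"
  unfolding valid_in_def by auto

lemma valid_in_K_nec: "topo_model M \<Longrightarrow> valid_in M a \<Longrightarrow> valid_in M (K i a)"
  unfolding valid_in_def using nbf_set_nbhd_subset_dom[OF topo_model_nbf_set] by fastforce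

lemma valid_in_int_nec:
  assumes "topo_model M" "valid_in M a"
  shows "valid_in M (IntOp a)"
  unfolding valid_in_def
proof (intro ballI)
  fix \<theta> x assume "\<theta> \<in> Phi M" "x \<in> dom \<theta>"
  moreover from \<open>\<theta> \<in> Phi M\<close> have "truth_set M a \<theta> = dom \<theta>"
    using assms(2) unfolding valid_in_def by auto
  ultimately show "sat M (IntOp a) \<theta> x"
    using nbf_set_openin_dom[OF topo_model_nbf_set[OF assms(1)]] by (simp add: interior_of_openin)
qed

lemma valid_in_ann_nec:
  assumes "topo_model M" "valid_in M a"
  shows "valid_in M (Ann b a)"
  unfolding valid_in_def
proof (intro ballI)
  fix \<theta> x assume "\<theta> \<in> Phi M" "x \<in> dom \<theta>"
  define U where "U = top M interior_of truth_set M b \<theta>"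
  have "restr \<theta> U \<in> Phi M"
    using nbf_set_restr[OF topo_model_nbf_set[OF assms(1)] \<open>\<theta> \<in> Phi M\<close>] by (simp add: U_def)
  then show "sat M (Ann b a) \<theta> x"
    using assms(2) \<open>x \<in> dom \<theta>\<close> unfolding valid_in_def by (simp add: U_def[symmetric] dom_restr)
qed

lemma ELint_valid_in:
  assumes "topo_model M" "ELint a"
  shows "valid_in M a"
  using assms(2) by (induction rule: ELint.induct)
    (auto intro: valid_in_ptaut valid_in_K_dist valid_in_K_T valid_in_K_4 valid_in_K_5
       valid_in_int_dist valid_in_int_T valid_in_int_4 valid_in_K_int valid_in_MP
       valid_in_K_nec valid_in_int_nec assms(1))

lemma PALint_valid_in:
  assumes "topo_model M" "PALint a"
  shows "valid_in M a"
  using assms(2) by (induction rule: PALint.induct)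
    (auto intro: valid_in_ptaut valid_in_K_dist valid_in_K_T valid_in_K_4 valid_in_K_5
       valid_in_int_dist valid_in_int_T valid_in_int_4 valid_in_K_int
       valid_in_R1 valid_in_R2 valid_in_R3 valid_in_R4 valid_in_R5 valid_in_R6
       valid_in_MP valid_in_K_nec valid_in_int_nec valid_in_ann_nec assms(1))

theorem mainTheorem5:
  fixes M :: "('x, 'ag :: finite, 'p :: countable) topo_model"
  assumes "topo_model M"
  shows "(\<forall>a :: ('p, 'ag) fm. ELint a \<longrightarrow> valid_in M a) \<and>
         (\<forall>a :: ('p, 'ag) fm. PALint a \<longrightarrow> valid_in M a)"
  using ELint_valid_in[OF assms] PALint_valid_in[OF assms] by blast

end
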